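(* Let $n\ge 2$, let $p, p', s \in B_{n}$ be braids satisfying $p' = s*p$ in $B_{n+1}$, and let $s'\in B_{n+1}$. Then $$p'\, \delta_{n+1}^{-1} = s' \cdot d(p)\, \sigma_1\, \delta_{n+1}^{-1} \cdot s'^{-1} \ \text{ in } B_{n+1} \iff s'^{-1} s\in C_{B_{n+1}}\big(d(p)\, \sigma_1\, \delta_{n+1}^{-1}\big),$$ where $C_{B_{n+1}}(x)$ denotes the centralizer of $x$ in $B_{n+1}$.
   Context: $B_m$ denotes the braid group on $m$ strands with Artin generators $\sigma_1,\dots,\sigma_{m-1}$ and relations $\sigma_i\sigma_j\sigma_i=\sigma_j\sigma_i\sigma_j$ for $|i-j|=1$, $\sigma_i\sigma_j=\sigma_j\sigma_i$ for $|i-j|>1$; $B_\infty$ is the braid group on generators $\sigma_1,\sigma_2,\dots$ with the same relations, and $B_m\subset B_{m+1}\subset B_\infty$ via the generators. The shift $d$ is the monomorphism of $B_\infty$ induced by $\sigma_{i_1}^{\varepsilon_1}\cdots\sigma_{i_k}^{\varepsilon_k}\mapsto \sigma_{i_1+1}^{\varepsilon_1}\cdots\sigma_{i_k+1}^{\varepsilon_k}$. The shifted conjugacy operator is $a*b = a\cdot d(b)\cdot \sigma_1\cdot d(a^{-1})$ for $a,b\in B_\infty$. Also $\delta_{n+1} = \sigma_{n}\sigma_{n-1}\cdots\sigma_1 \in B_{n+1}$. *)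

theory Defs
  imports Main
begin

text \<open>Braid words: a letter (i, True) is the Artin generator sigma_i, (i, False) is its inverse.\<close>
type_synonym bword = "(nat \<times> bool) list"

definition binv :: "bword \<Rightarrow> bword" where
  "binv w = rev (map (\<lambda>(i, b). (i, \<not> b)) w)"

definition in_B :: "nat \<Rightarrow> bword \<Rightarrow> bool" where
  "in_B m w \<longleftrightarrow> (\<forall>(i, b) \<in> set w. 1 \<le> i \<and> i < m)"

inductive braid_eq :: "nat \<Rightarrow> bword \<Rightarrow> bword \<Rightarrow> bool" for m :: nat where
  refl: "braid_eq m w w"
| sym: "braid_eq m u v \<Longrightarrow> braid_eq m v u"
| trans: "braid_eq m u v \<Longrightarrow> braid_eq m v w \<Longrightarrow> braid_eq m u w"
| ctx: "braid_eq m u v \<Longrightarrow> braid_eq m (a @ u @ c) (a @ v @ c)"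
| cancel: "1 \<le> i \<Longrightarrow> i < m \<Longrightarrow> braid_eq m [(i, b), (i, \<not> b)] []"
| braid: "1 \<le> i \<Longrightarrow> Suc i < m \<Longrightarrow>
    braid_eq m [(i, True), (Suc i, True), (i, True)] [(Suc i, True), (i, True), (Suc i, True)]"
| comm: "1 \<le> i \<Longrightarrow> j < m \<Longrightarrow> Suc i < j \<Longrightarrow>
    braid_eq m [(i, True), (j, True)] [(j, True), (i, True)]"

definition shift :: "bword \<Rightarrow> bword" where
  "shift w = map (\<lambda>(i, b). (Suc i, b)) w"

definition sigma1 :: bword where
  "sigma1 = [(1, True)]"

text \<open>Shifted conjugacy a * b = a d(b) sigma_1 d(a^-1).\<close>
definition shifted_conj :: "bword \<Rightarrow> bword \<Rightarrow> bword" where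
  "shifted_conj a b = a @ shift b @ sigma1 @ shift (binv a)"

text \<open>delta_(n+1) = sigma_n sigma_(n-1) ... sigma_1 (as an element of B_(n+1)).\<close>
definition delta :: "nat \<Rightarrow> bword" where
  "delta n = map (\<lambda>i. (i, True)) (rev [1..<Suc n])"

definition centralizer_B :: "nat \<Rightarrow> bword \<Rightarrow> bword set" where
  "centralizer_B m x = {c. in_B m c \<and> braid_eq m (c @ x) (x @ c)}"

end

theory Submission
  imports Defs
begin

text \<open>Since \<open>p' = s d(p) \<sigma>\<^sub>1 d(s\<^sup>-\<^sup>1)\<close> and \<open>\<delta>\<^sub>n\<^sub>+\<^sub>1\<close> conjugates \<open>d(w)\<close> to \<open>w\<close> for every
  \<open>w \<in> B\<^sub>n\<close>, we get \<open>p' \<delta>\<^sup>-\<^sup>1 = s X s\<^sup>-\<^sup>1\<close> with \<open>X = d(p) \<sigma>\<^sub>1 \<delta>\<^sup>-\<^sup>1\<close>. The equivalence is then the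
  group-theoretic fact that \<open>s X s\<^sup>-\<^sup>1 = s' X s'\<^sup>-\<^sup>1\<close> iff \<open>s'\<^sup>-\<^sup>1 s\<close> commutes with \<open>X\<close>.\<close>

lemmas [trans] = braid_eq.trans

lemma braid_eq_ctx_eq:
  "braid_eq m u v \<Longrightarrow> L = a @ u @ c \<Longrightarrow> R = a @ v @ c \<Longrightarrow> braid_eq m L R"
  using braid_eq.ctx by blast

lemma braid_eq_append:
  assumes "braid_eq m u v" and "braid_eq m u' v'"
  shows "braid_eq m (u @ u') (v @ v')"
proof -
  have "braid_eq m (u @ u') (v @ u')" by (rule braid_eq_ctx_eq[OF assms(1), of _ "[]" u']) simp_all
  also have "braid_eq m (v @ u') (v @ v')" by (rule braid_eq_ctx_eq[OF assms(2), of _ v "[]"]) simp_all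
  finally show ?thesis .
qed

lemma braid_eq_iff_cong:
  "braid_eq m u u' \<Longrightarrow> braid_eq m v v' \<Longrightarrow> braid_eq m u v \<longleftrightarrow> braid_eq m u' v'"
  by (meson braid_eq.sym braid_eq.trans)

lemma braid_eq_mono: "braid_eq m u v \<Longrightarrow> m \<le> m' \<Longrightarrow> braid_eq m' u v"
  by (induction rule: braid_eq.induct) (auto intro: braid_eq.intros)

lemma in_B_append [simp]: "in_B m (u @ v) \<longleftrightarrow> in_B m u \<and> in_B m v"
  unfolding in_B_def by auto

lemma in_B_binv [simp]: "in_B m (binv u) \<longleftrightarrow> in_B m u"
  unfolding in_B_def binv_def by auto

lemma in_B_mono: "in_B m u \<Longrightarrow> m \<le> m' \<Longrightarrow> in_B m' u"
  unfolding in_B_def by auto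

lemma binv_binv [simp]: "binv (binv w) = w"
  unfolding binv_def by (induction w) auto

lemma binv_Cons: "binv ((i, b) # w) = binv w @ [(i, \<not> b)]"
  unfolding binv_def by simp

lemma braid_eq_append_binv: "in_B m w \<Longrightarrow> braid_eq m (w @ binv w) []"
proof (induction w)
  case Nil
  show ?case by (simp add: binv_def braid_eq.refl)
next
  case (Cons x w)
  obtain i b where x: "x = (i, b)" by (cases x)
  have w: "in_B m w" and i: "1 \<le> i" "i < m" using Cons.prems x unfolding in_B_def by auto
  have "braid_eq m ((i, b) # w @ binv w @ [(i, \<not> b)]) [(i, b), (i, \<not> b)]"
    by (rule braid_eq_ctx_eq[OF Cons.IH[OF w], of _ "[(i, b)]" "[(i, \<not> b)]"]) simp_all
  also have "braid_eq m [(i, b), (i, \<not> b)] []" using braid_eq.cancel[OF i] .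
  finally show ?case by (simp add: x binv_Cons)
qed

lemma braid_eq_binv_append: "in_B m w \<Longrightarrow> braid_eq m (binv w @ w) []"
  using braid_eq_append_binv[of m "binv w"] by simp

lemma braid_eq_cancel_left:
  assumes "in_B m a"
  shows "braid_eq m (a @ u) (a @ v) \<longleftrightarrow> braid_eq m u v"
proof
  assume "braid_eq m (a @ u) (a @ v)"
  then have "braid_eq m (binv a @ a @ u) (binv a @ a @ v)"
    by (rule braid_eq_ctx_eq[of _ _ _ _ "binv a" "[]"]) simp_all
  moreover have "braid_eq m (binv a @ a @ w) w" for w
    by (rule braid_eq_ctx_eq[OF braid_eq_binv_append[OF assms], of _ "[]" w]) simp_all
  ultimately show "braid_eq m u v" using braid_eq_iff_cong by blast
qed (rule braid_eq_ctx_eq[of _ _ _ _ a "[]"], simp_all)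

lemma braid_eq_cancel_right:
  assumes "in_B m a"
  shows "braid_eq m (u @ a) (v @ a) \<longleftrightarrow> braid_eq m u v"
proof
  assume "braid_eq m (u @ a) (v @ a)"
  then have "braid_eq m (u @ a @ binv a) (v @ a @ binv a)"
    by (rule braid_eq_ctx_eq[of _ _ _ _ "[]" "binv a"]) simp_all
  moreover have "braid_eq m (w @ a @ binv a) w" for w
    by (rule braid_eq_ctx_eq[OF braid_eq_append_binv[OF assms], of _ w "[]"]) simp_all
  ultimately show "braid_eq m u v" using braid_eq_iff_cong by blast
qed (rule braid_eq_ctx_eq[of _ _ _ _ "[]" a], simp_all)

lemma conj_eq_iff_commute:
  assumes s: "in_B m s" and t: "in_B m t"
  shows "braid_eq m (s @ x @ binv s) (t @ x @ binv t) \<longleftrightarrow>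
         braid_eq m (binv t @ s @ x) (x @ binv t @ s)"
proof -
  have "braid_eq m (s @ x @ binv s) (t @ x @ binv t) \<longleftrightarrow>
        braid_eq m (binv t @ s @ x @ binv s) (binv t @ t @ x @ binv t)"
    using braid_eq_cancel_left[of m "binv t"] t by simp
  also have "\<dots> \<longleftrightarrow> braid_eq m (binv t @ s @ x @ binv s) (x @ binv t)"
    by (rule braid_eq_iff_cong[OF braid_eq.refl],
        rule braid_eq_ctx_eq[OF braid_eq_binv_append[OF t], of _ "[]" "x @ binv t"]) simp_all
  also have "\<dots> \<longleftrightarrow> braid_eq m (binv t @ s @ x @ binv s @ s) (x @ binv t @ s)"
    using braid_eq_cancel_right[OF s, of "binv t @ s @ x @ binv s" "x @ binv t"] by simp
  also have "\<dots> \<longleftrightarrow> braid_eq m (binv t @ s @ x) (x @ binv t @ s)"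
    by (rule braid_eq_iff_cong[OF _ braid_eq.refl],
        rule braid_eq_ctx_eq[OF braid_eq_binv_append[OF s], of _ "binv t @ s @ x" "[]"]) simp_all
  finally show ?thesis .
qed

lemma conj_swap_binv:
  assumes a: "in_B m a" and "braid_eq m (a @ u) (v @ a)"
  shows "braid_eq m (u @ binv a) (binv a @ v)"
proof -
  have "braid_eq m (u @ binv a) (binv a @ a @ u @ binv a)"
    by (rule braid_eq.sym, rule braid_eq_ctx_eq[OF braid_eq_binv_append[OF a], of _ "[]" "u @ binv a"])
      simp_all
  also have "braid_eq m (binv a @ a @ u @ binv a) (binv a @ v @ a @ binv a)"
    by (rule braid_eq_ctx_eq[OF assms(2), of _ "binv a" "binv a"]) simp_all
  also have "braid_eq m (binv a @ v @ a @ binv a) (binv a @ v)"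
    by (rule braid_eq_ctx_eq[OF braid_eq_append_binv[OF a], of _ "binv a @ v" "[]"]) simp_all
  finally show ?thesis .
qed

lemma conj_binv:
  assumes "in_B m u" and "in_B m v" and "braid_eq m (a @ u) (v @ a)"
  shows "braid_eq m (a @ binv u) (binv v @ a)"
proof -
  have "braid_eq m (a @ binv u) (binv v @ v @ a @ binv u)"
    by (rule braid_eq.sym,
        rule braid_eq_ctx_eq[OF braid_eq_binv_append[OF assms(2)], of _ "[]" "a @ binv u"]) simp_all
  also have "braid_eq m (binv v @ v @ a @ binv u) (binv v @ a @ u @ binv u)"
    by (rule braid_eq_ctx_eq[OF braid_eq.sym[OF assms(3)], of _ "binv v" "binv u"]) simp_all
  also have "braid_eq m (binv v @ a @ u @ binv u) (binv v @ a)"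
    by (rule braid_eq_ctx_eq[OF braid_eq_append_binv[OF assms(1)], of _ "binv v @ a" "[]"]) simp_all
  finally show ?thesis .
qed

lemma delta_Suc [simp]: "delta (Suc n) = (Suc n, True) # delta n"
  by (simp add: delta_def)

lemma delta_0 [simp]: "delta 0 = []"
  by (simp add: delta_def)

lemma in_B_delta: "in_B (Suc n) (delta n)"
  unfolding in_B_def delta_def by auto

lemma braid_eq_commute:
  assumes "1 \<le> i" "1 \<le> j" "i < m" "j < m" "Suc i < j \<or> Suc j < i"
  shows "braid_eq m [(i, True), (j, True)] [(j, True), (i, True)]"
  using assms braid_eq.comm[where i = i and j = j] braid_eq.comm[where i = j and j = i]
  by (auto intro: braid_eq.sym)

lemma delta_commute_letter:
  "Suc j < x \<Longrightarrow> x < m \<Longrightarrow> braid_eq m (delta j @ [(x, True)]) ((x, True) # delta j)"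
proof (induction j)
  case 0
  show ?case by (simp add: braid_eq.refl)
next
  case (Suc j)
  have "braid_eq m ((Suc j, True) # delta j @ [(x, True)]) ((Suc j, True) # (x, True) # delta j)"
    by (rule braid_eq_ctx_eq[OF Suc.IH, of _ "[(Suc j, True)]" "[]"]) (use Suc.prems in simp_all)
  also have "braid_eq m \<dots> ((x, True) # (Suc j, True) # delta j)"
    by (rule braid_eq_ctx_eq[OF braid_eq_commute, of "Suc j" x m _ "[]" "delta j"])
      (use Suc.prems in simp_all)
  finally show ?case by simp
qed

text \<open>Only the letter \<open>\<sigma>\<^sub>i\<close> of \<open>\<delta>\<close> interacts with \<open>\<sigma>\<^sub>i\<^sub>+\<^sub>1\<close> (by the braid relation); all
  other letters commute with it.\<close>
lemma delta_shift_letter: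
  "1 \<le> i \<Longrightarrow> Suc i \<le> n \<Longrightarrow> braid_eq (Suc n) (delta n @ [(Suc i, True)]) ((i, True) # delta n)"
proof (induction n)
  case 0
  then show ?case by simp
next
  case (Suc k)
  show ?case
  proof (cases "k = i")
    case True
    obtain j where i: "i = Suc j" using Suc.prems by (cases i) auto
    have "braid_eq (Suc (Suc k)) ((Suc i, True) # (i, True) # delta j @ [(Suc i, True)])
        ((Suc i, True) # (i, True) # (Suc i, True) # delta j)"
      by (rule braid_eq_ctx_eq[OF delta_commute_letter, of j "Suc i" _ _ "[(Suc i, True), (i, True)]" "[]"])
        (use True i in simp_all)
    also have "braid_eq (Suc (Suc k)) \<dots> ((i, True) # (Suc i, True) # (i, True) # delta j)"
      by (rule braid_eq_ctx_eq[OF braid_eq.sym[OF braid_eq.braid[where i = i]], of _ _ "[]" "delta j"])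
        (use True Suc.prems in simp_all)
    finally show ?thesis using True i by simp
  next
    case False
    then have ik: "Suc i \<le> k" using Suc.prems by auto
    have "braid_eq (Suc (Suc k)) ((Suc k, True) # delta k @ [(Suc i, True)])
        ((Suc k, True) # (i, True) # delta k)"
      by (rule braid_eq_ctx_eq[OF braid_eq_mono[OF Suc.IH[OF Suc.prems(1) ik]], of _ _ "[(Suc k, True)]" "[]"])
        simp_all
    also have "braid_eq (Suc (Suc k)) \<dots> ((i, True) # (Suc k, True) # delta k)"
      by (rule braid_eq_ctx_eq[OF braid_eq_commute, of "Suc k" i _ _ "[]" "delta k"])
        (use ik Suc.prems in simp_all)
    finally show ?thesis by simp
  qed
qed

lemma delta_shift:
  "in_B n w \<Longrightarrow> braid_eq (Suc n) (delta n @ shift w) (w @ delta n)"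
proof (induction w)
  case Nil
  show ?case by (simp add: shift_def braid_eq.refl)
next
  case (Cons x w)
  obtain i b where x: "x = (i, b)" by (cases x)
  have w: "in_B n w" and i: "1 \<le> i" "Suc i \<le> n" using Cons.prems x unfolding in_B_def by auto
  have letter: "braid_eq (Suc n) (delta n @ [(Suc i, b)]) ((i, b) # delta n)"
  proof (cases b)
    case True
    then show ?thesis using delta_shift_letter[OF i] by simp
  next
    case False
    have "braid_eq (Suc n) (delta n @ [(Suc i, True)]) ([(i, True)] @ delta n)"
      using delta_shift_letter[OF i] by simp
    then show ?thesis
      using False conj_binv[of "Suc n" "[(Suc i, True)]" "[(i, True)]"] i
      by (simp add: binv_def in_B_def)
  qed
  have "braid_eq (Suc n) (delta n @ (Suc i, b) # shift w) ((i, b) # delta n @ shift w)"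
    by (rule braid_eq_ctx_eq[OF letter, of _ "[]" "shift w"]) simp_all
  also have "braid_eq (Suc n) \<dots> ((i, b) # w @ delta n)"
    by (rule braid_eq_ctx_eq[OF Cons.IH[OF w], of _ "[(i, b)]" "[]"]) simp_all
  finally show ?case by (simp add: x shift_def)
qed

lemma shifted_conj_binv_delta:
  assumes "in_B n s"
  shows "braid_eq (Suc n) (shifted_conj s p @ binv (delta n))
           (s @ (shift p @ sigma1 @ binv (delta n)) @ binv s)"
proof -
  have "braid_eq (Suc n) (shift (binv s) @ binv (delta n)) (binv (delta n) @ binv s)"
    using conj_swap_binv[OF in_B_delta delta_shift] assms by simp
  then show ?thesis
    by (rule braid_eq_ctx_eq[of _ _ _ _ "s @ shift p @ sigma1" "[]"]) (simp_all add: shifted_conj_def)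
qed

theorem proposition2:
  fixes n :: nat and p p' s s' :: bword
  assumes "n \<ge> 2"
    and "in_B n p" and "in_B n p'" and "in_B n s"
    and "braid_eq (Suc n) p' (shifted_conj s p)"
    and "in_B (Suc n) s'"
  shows "braid_eq (Suc n) (p' @ binv (delta n))
            (s' @ shift p @ sigma1 @ binv (delta n) @ binv s')
         \<longleftrightarrow> binv s' @ s \<in> centralizer_B (Suc n) (shift p @ sigma1 @ binv (delta n))"
proof -
  define X where "X = shift p @ sigma1 @ binv (delta n)"
  have s: "in_B (Suc n) s" using assms(4) by (rule in_B_mono) simp
  have "braid_eq (Suc n) (p' @ binv (delta n)) (s @ X @ binv s)"
    using braid_eq_append[OF assms(5) braid_eq.refl] shifted_conj_binv_delta[OF assms(4)]
    unfolding X_def by (rule braid_eq.trans)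
  then have "braid_eq (Suc n) (p' @ binv (delta n)) (s' @ X @ binv s') \<longleftrightarrow>
             braid_eq (Suc n) (s @ X @ binv s) (s' @ X @ binv s')"
    by (rule braid_eq_iff_cong[OF _ braid_eq.refl])
  also have "\<dots> \<longleftrightarrow> braid_eq (Suc n) ((binv s' @ s) @ X) (X @ binv s' @ s)"
    using conj_eq_iff_commute[OF s assms(6)] by simp
  finally show ?thesis
    using s assms(6) by (simp add: X_def centralizer_B_def)
qed

end
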